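(* Let $(\mathcal{X},d)$ be a metric space, $\mathbb{P}\colon \mathcal{X}\to[0,+\infty)$ a function (a probability density), $\mathcal{S}_\mathbf{x}=\{\mathbf{x}_1,\dots,\mathbf{x}_n\}\subset\mathcal{X}$ a finite point cloud, $\delta\ge 0$, and $\sigma\colon\mathcal{X}\times\mathcal{X}\to(0,+\infty)$ a threshold function. Assume that the Rips graph $R_\delta(\mathcal{S}_\mathbf{x})$ and the $\sigma$-Rips graph $R_{\sigma(\cdot)}(\mathcal{S}_\mathbf{x})$ have the same connected components (as partitions of $\mathcal{S}_\mathbf{x}$). Then \[ d_B^{\infty}\Big(D\mathbf{R}_{\delta}(\mathcal{S}_\mathbf{x},\mathbb{P}),\,D\mathbf{R}_{\sigma(\cdot)}(\mathcal{S}_\mathbf{x},\mathbb{P})\Big)\;\le\;\max_{(\mathbf{x}_i,\mathbf{x}_j)\in\mathcal{S}_\mathbf{x}^2}\big|\alpha_\delta(\mathbf{x}_i,\mathbf{x}_j)-\alpha_{\sigma(\cdot)}(\mathbf{x}_i,\mathbf{x}_j)\big|, \] where $\alpha_\delta(\mathbf{x}_i,\mathbf{x}_j)=\alpha_{\sigma(\cdot)}(\mathbf{x}_i,\mathbf{x}_j)=0$ by convention whenever $\mathbf{x}_i$ and $\mathbf{x}_j$ are not in the same connected component.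
   Context: Rips graph: $R_\delta(\mathcal{S}_\mathbf{x})$ is the graph with vertex set $\mathcal{S}_\mathbf{x}$ and an edge between $\mathbf{x}_i\neq\mathbf{x}_j$ iff $d(\mathbf{x}_i,\mathbf{x}_j)\le\delta$. $\sigma$-Rips graph: $R_{\sigma(\cdot)}(\mathcal{S}_\mathbf{x})$ is the graph with vertex set $\mathcal{S}_\mathbf{x}$ and an edge between $\mathbf{x}_i\neq\mathbf{x}_j$ iff $d(\mathbf{x}_i,\mathbf{x}_j)\le\sigma(\mathbf{x}_i,\mathbf{x}_j)$. For a subset $A\subseteq\mathcal{S}_\mathbf{x}$, $R_\delta(A)$ (resp. $R_{\sigma(\cdot)}(A)$) denotes the same construction on vertex set $A$ (i.e. the induced subgraph). Upper-star filtration and persistence module: for $\alpha\in\overline{\mathbb{R}}=\mathbb{R}\cup\{\pm\infty\}$ let $R_{\delta,\alpha}=R_\delta(\mathcal{S}_\mathbf{x}\cap\mathbb{P}^{-1}([\alpha,+\infty]))$. For $\alpha\le\beta$ there is an inclusion $R_{\delta,\beta}\subseteq R_{\delta,\alpha}$, inducing a linear map $H_0(R_{\delta,\beta})\to H_0(R_{\delta,\alpha})$, where $H_0(G)$ is the vector space (over a fixed field) with basis the connected components of the graph $G$. The family $\mathbf{R}_\delta(\mathcal{S}_\mathbf{x},\mathbb{P})=(H_0(R_{\delta,\alpha}))_{\alpha\in\overline{\mathbb{R}}}$ with these maps is a persistence module (time flows from $+\infty$ to $-\infty$); $\mathbf{R}_{\sigma(\cdot)}(\mathcal{S}_\mathbf{x},\mathbb{P})$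 is defined identically with $R_{\sigma(\cdot)}$ in place of $R_\delta$. Persistence diagram: $D\mathbf{X}$ of such a module is the multiset in $\overline{\mathbb{R}}^2$ consisting of the diagonal $\{(x,x):x\in\overline{\mathbb{R}}\}$ (each point with infinite multiplicity) together with one point $(b,e)$, $e<b$, for each interval-basis element (connected component class) born at level $b$ and dying (merging into an older component, per the elder rule) at level $e$; a component that never dies has $e=-\infty$. Bottleneck distance: for multisets $A_1,A_2\subset\overline{\mathbb{R}}^2$, $d_B^\infty(A_1,A_2)=\inf_{\gamma}\sup_{p\in A_1}\|p-\gamma(p)\|_\infty$, the infimum over multiset bijections $\gamma\colon A_1\to A_2$ (with the convention $|(-\infty)-(-\infty)|=0$). Appearance level: for $\mathbf{x}_i,\mathbf{x}_j\in\mathcal{S}_\mathbf{x}$ in the same connected component of $R_\delta(\mathcal{S}_\mathbf{x})$, $\alpha_\delta(\mathbf{x}_i,\mathbf{x}_j)=\max_{\gamma\in\mathcal{P}(\mathbf{x}_i,\mathbf{x}_j)}\min_{\mathbf{x}\in\gamma}\mathbb{P}(\mathbf{x})$, where $\mathcal{P}(\mathbf{x}_i,\mathbf{x}_j)$ is the set of paths (sequences of vertices with consecutive vertices adjacent) in $R_\delta(\mathcal{S}_\mathbf{x})$ from $\mathbf{x}_i$ to $\mathbf{x}_j$; equivalently, the largest $\alpha$ such that $\mathbf{x}_i,\mathbf{x}_j$ lie in the same connected component of $R_{\delta,\alpha}$. $\alpha_{\sigma(\cdot)}$ is defined identically using paths in $R_{\sigma(\cdot)}(\mathcal{S}_\mathbf{x})$.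 *)

theory Defs
  imports Complex_Main "HOL-Library.Extended_Real"
begin

text \<open>Undirected adjacency: distinct vertices, edge condition for either ordering
  (for a symmetric threshold this is just the edge condition).\<close>
definition adj :: "('a \<Rightarrow> 'a \<Rightarrow> bool) \<Rightarrow> 'a \<Rightarrow> 'a \<Rightarrow> bool" where
  "adj E u v \<longleftrightarrow> u \<noteq> v \<and> (E u v \<or> E v u)"

definition rips_edge :: "real \<Rightarrow> 'a::metric_space \<Rightarrow> 'a \<Rightarrow> bool" where
  "rips_edge \<delta> u v \<longleftrightarrow> dist u v \<le> \<delta>"

definition sigma_rips_edge :: "('a::metric_space \<Rightarrow> 'a \<Rightarrow> real) \<Rightarrow> 'a \<Rightarrow> 'a \<Rightarrow> bool" where
  "sigma_rips_edge \<sigma> u v \<longleftrightarrow> dist u v \<le> \<sigma> u v"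

definition is_path :: "'a set \<Rightarrow> ('a \<Rightarrow> 'a \<Rightarrow> bool) \<Rightarrow> 'a list \<Rightarrow> 'a \<Rightarrow> 'a \<Rightarrow> bool" where
  "is_path V E xs u v \<longleftrightarrow> xs \<noteq> [] \<and> hd xs = u \<and> last xs = v \<and> set xs \<subseteq> V \<and>
     (\<forall>i. Suc i < length xs \<longrightarrow> adj E (xs ! i) (xs ! Suc i))"

definition connected_in :: "'a set \<Rightarrow> ('a \<Rightarrow> 'a \<Rightarrow> bool) \<Rightarrow> 'a \<Rightarrow> 'a \<Rightarrow> bool" where
  "connected_in V E u v \<longleftrightarrow> (\<exists>xs. is_path V E xs u v)"

definition components :: "'a set \<Rightarrow> ('a \<Rightarrow> 'a \<Rightarrow> bool) \<Rightarrow> 'a set set" where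
  "components V E = {{w \<in> V. connected_in V E u w} | u. u \<in> V}"

definition superlevel :: "'a set \<Rightarrow> ('a \<Rightarrow> real) \<Rightarrow> ereal \<Rightarrow> 'a set" where
  "superlevel S P \<alpha> = {x \<in> S. \<alpha> \<le> ereal (P x)}"

definition appearance :: "'a set \<Rightarrow> ('a \<Rightarrow> real) \<Rightarrow> ('a \<Rightarrow> 'a \<Rightarrow> bool) \<Rightarrow> 'a \<Rightarrow> 'a \<Rightarrow> real" where
  "appearance S P E u v =
     (if connected_in S E u v
      then Max {Min (P ` set xs) | xs. is_path S E xs u v}
      else 0)"

text \<open>Total orders ("age") on S refining the filtration: a vertex with larger P is born
  earlier, hence is older (smaller rank). Ties broken arbitrarily; the resulting diagram does
  not depend on the tie-breaking.\<close>
definition elder_ranks :: "'a set \<Rightarrow> ('a \<Rightarrow> real) \<Rightarrow> ('a \<Rightarrow> nat) set" where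
  "elder_ranks S P = {r. inj_on r S \<and> (\<forall>u\<in>S. \<forall>v\<in>S. P v < P u \<longrightarrow> r u < r v)}"

definition elder_rank :: "'a set \<Rightarrow> ('a \<Rightarrow> real) \<Rightarrow> 'a \<Rightarrow> nat" where
  "elder_rank S P = (SOME r. r \<in> elder_ranks S P)"

text \<open>Death level of the class whose oldest vertex is v: the (largest) level at which v's
  component contains an older vertex (merges into an older class); -\<infinity> if never.\<close>
definition death :: "'a set \<Rightarrow> ('a \<Rightarrow> real) \<Rightarrow> ('a \<Rightarrow> 'a \<Rightarrow> bool) \<Rightarrow> 'a \<Rightarrow> ereal" where
  "death S P E v = Sup {\<alpha>. \<exists>u\<in>S. elder_rank S P u < elder_rank S P v \<and>
                                  connected_in (superlevel S P \<alpha>) E u v}"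

text \<open>A persistence diagram as an indexed multiset: the index set and the point map.
  Off-diagonal points (b,e), e<b, are indexed by their oldest vertex; the diagonal
  (each point with infinite multiplicity) is indexed by ereal \<times> nat.\<close>
type_synonym ('a) pd_idx = "'a + ereal \<times> nat"

definition pd_index :: "'a set \<Rightarrow> ('a \<Rightarrow> real) \<Rightarrow> ('a \<Rightarrow> 'a \<Rightarrow> bool) \<Rightarrow> 'a pd_idx set" where
  "pd_index S P E = Inl ` {v \<in> S. death S P E v < ereal (P v)} \<union> range Inr"

definition pd_point :: "'a set \<Rightarrow> ('a \<Rightarrow> real) \<Rightarrow> ('a \<Rightarrow> 'a \<Rightarrow> bool) \<Rightarrow> 'a pd_idx \<Rightarrow> ereal \<times> ereal" where
  "pd_point S P E i = (case i of Inl v \<Rightarrow> (ereal (P v), death S P E v) | Inr (x, n) \<Rightarrow> (x, x))"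

definition persistence_diagram ::
  "'a set \<Rightarrow> ('a \<Rightarrow> real) \<Rightarrow> ('a \<Rightarrow> 'a \<Rightarrow> bool) \<Rightarrow> 'a pd_idx set \<times> ('a pd_idx \<Rightarrow> ereal \<times> ereal)" where
  "persistence_diagram S P E = (pd_index S P E, pd_point S P E)"

text \<open>|a - b| with the convention |(-\<infinity>) - (-\<infinity>)| = 0 (and likewise for +\<infinity>).\<close>
definition ediff :: "ereal \<Rightarrow> ereal \<Rightarrow> ereal" where
  "ediff a b = (if a = b then 0 else \<bar>a - b\<bar>)"

definition linf_dist :: "ereal \<times> ereal \<Rightarrow> ereal \<times> ereal \<Rightarrow> ereal" where
  "linf_dist p q = max (ediff (fst p) (fst q)) (ediff (snd p) (snd q))"

definition bottleneck :: "'i set \<times> ('i \<Rightarrow> ereal \<times> ereal) \<Rightarrow> 'j set \<times> ('j \<Rightarrow> ereal \<times> ereal) \<Rightarrow> ereal" where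
  "bottleneck D1 D2 =
     (INF f \<in> {f. bij_betw f (fst D1) (fst D2)}.
        SUP i \<in> fst D1. linf_dist (snd D1 i) (snd D2 (f i)))"

end

theory Submission
  imports Defs "HOL-Library.Countable_Set"
begin

text \<open>The class born at a vertex v dies at the largest appearance level \<open>\<alpha>(u, v)\<close> over the
  older vertices u of v's component. Since both graphs have the same components and the same
  elder order, the two death levels of v are maxima of the two appearance functions over the
  same finite set, hence differ by at most the right-hand side M. Points off the diagonal in
  both diagrams are matched through their vertex; a point present in only one diagram has its
  death within M of its birth and is matched to a diagonal point at its birth level. Diagonal
  points of equal level are matched among themselves, which is possible because every level
  set of indices is countably infinite.\<close>

subsection \<open>Paths and connectivity\<close>

lemma all_nth_Suc_iff_successively:
  "(\<forall>i. Suc i < length xs \<longrightarrow> R (xs ! i) (xs ! Suc i)) \<longleftrightarrow> successively R xs"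
proof (induction R xs rule: successively.induct)
  case (3 R x y xs)
  have "(\<forall>i. Suc i < length (x # y # xs) \<longrightarrow> R ((x # y # xs) ! i) ((x # y # xs) ! Suc i)) \<longleftrightarrow>
        R x y \<and> (\<forall>i. Suc i < length (y # xs) \<longrightarrow> R ((y # xs) ! i) ((y # xs) ! Suc i))"
    (is "?L \<longleftrightarrow> ?R")
  proof
    assume ?L
    then show ?R by (metis Suc_less_eq length_Cons nth_Cons_0 nth_Cons_Suc zero_less_Suc)
  next
    assume ?R
    then show ?L by (auto simp: nth_Cons split: nat.split)
  qed
  with 3 show ?case by simp
qed auto

lemma is_path_iff_successively:
  "is_path V E xs u v \<longleftrightarrow>
     xs \<noteq> [] \<and> hd xs = u \<and> last xs = v \<and> set xs \<subseteq> V \<and> successively (adj E) xs"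
  unfolding is_path_def all_nth_Suc_iff_successively ..

lemma connected_in_refl: "u \<in> V \<Longrightarrow> connected_in V E u u"
  unfolding connected_in_def is_path_iff_successively by (rule exI[of _ "[u]"]) auto

lemma connected_in_sym:
  assumes "connected_in V E u v"
  shows "connected_in V E v u"
proof -
  obtain xs where path: "is_path V E xs u v" using assms unfolding connected_in_def by blast
  then have "successively (adj E) xs" by (simp add: is_path_iff_successively)
  then have "successively (\<lambda>x y. adj E y x) xs" by (rule successively_mono) (auto simp: adj_def)
  with path have "is_path V E (rev xs) v u"
    by (auto simp: is_path_iff_successively hd_rev last_rev successively_rev)
  then show ?thesis unfolding connected_in_def by blast
qed

lemma connected_in_trans:
  assumes "connected_in V E u v" "connected_in V E v w"
  shows "connected_in V E u w"
proof -
  obtain xs ys where xs: "is_path V E xs u v" and ys: "is_path V E ys v w"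
    using assms unfolding connected_in_def by blast
  then obtain zs where "ys = v # zs" by (cases ys) (auto simp: is_path_def)
  with xs ys have "is_path V E (xs @ zs) u w"
    by (auto simp: is_path_iff_successively successively_append_iff successively_Cons)
  then show ?thesis unfolding connected_in_def by blast
qed

lemma connected_in_imp_mem:
  assumes "connected_in V E u v"
  shows "u \<in> V" "v \<in> V"
proof -
  obtain xs where "xs \<noteq> []" "hd xs = u" "last xs = v" "set xs \<subseteq> V"
    using assms unfolding connected_in_def is_path_def by blast
  then show "u \<in> V" "v \<in> V" using hd_in_set last_in_set by blast+
qed

lemma connected_in_iff_of_components_eq:
  assumes "components V E1 = components V E2" "u \<in> V"
  shows "connected_in V E1 u w \<longleftrightarrow> connected_in V E2 u w"
proof -
  have "{w \<in> V. connected_in V E1 u w} \<in> components V E1"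
    unfolding components_def using assms(2) by blast
  then have "{w \<in> V. connected_in V E1 u w} \<in> components V E2" by (simp only: assms(1))
  then obtain u' where u': "{w \<in> V. connected_in V E1 u w} = {w \<in> V. connected_in V E2 u' w}"
    unfolding components_def by blast
  then have comp_eq: "connected_in V E1 u x \<longleftrightarrow> x \<in> V \<and> connected_in V E2 u' x" for x
    using connected_in_imp_mem(2)[of V E1 u x] by (simp add: set_eq_iff) blast
  have "connected_in V E2 u' u"
    using comp_eq[of u] connected_in_refl[OF assms(2)] by blast
  then have "connected_in V E2 u' w \<longleftrightarrow> connected_in V E2 u w"
    using connected_in_sym connected_in_trans by metis
  with comp_eq[of w] show ?thesis using connected_in_imp_mem(2)[of V E2 u w] by blast
qed

subsection \<open>Appearance levels and death levels\<close>

lemma finite_path_minima: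
  assumes "finite S"
  shows "finite {Min (P ` set xs) | xs. is_path S E xs u v}"
proof (rule finite_subset)
  show "{Min (P ` set xs) | xs. is_path S E xs u v} \<subseteq> P ` S"
  proof
    fix y assume "y \<in> {Min (P ` set xs) | xs. is_path S E xs u v}"
    then obtain xs where "y = Min (P ` set xs)" "is_path S E xs u v" by blast
    then have "y = Min (P ` set xs)" "xs \<noteq> []" "set xs \<subseteq> S" by (auto simp: is_path_def)
    moreover have "Min (P ` set xs) \<in> P ` set xs" using \<open>xs \<noteq> []\<close> by (intro Min_in) auto
    ultimately show "y \<in> P ` S" by blast
  qed
qed (use assms in simp)

lemma appearance_attained:
  assumes "finite S" "connected_in S E u v"
  obtains xs where "is_path S E xs u v" "appearance S P E u v = Min (P ` set xs)"
proof -
  have nonempty: "{Min (P ` set xs) | xs. is_path S E xs u v} \<noteq> {}"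
    using assms(2) unfolding connected_in_def by blast
  have "appearance S P E u v \<in> {Min (P ` set xs) | xs. is_path S E xs u v}"
    unfolding appearance_def using assms(2) Max_in[OF finite_path_minima[OF assms(1)] nonempty] by simp
  then show thesis using that by blast
qed

lemma path_min_le_appearance:
  assumes "finite S" "is_path S E xs u v"
  shows "Min (P ` set xs) \<le> appearance S P E u v"
proof -
  have "connected_in S E u v" using assms(2) unfolding connected_in_def by blast
  moreover have "Min (P ` set xs) \<in> {Min (P ` set xs) | xs. is_path S E xs u v}"
    using assms(2) by blast
  ultimately show ?thesis
    unfolding appearance_def using Max_ge[OF finite_path_minima[OF assms(1)]] by simp
qed

lemma appearance_le_endpoint:
  assumes "finite S" "connected_in S E u v"
  shows "appearance S P E u v \<le> P v"
proof -
  obtain xs where "is_path S E xs u v" "appearance S P E u v = Min (P ` set xs)"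
    using appearance_attained[OF assms] .
  then show ?thesis by (auto simp: is_path_def)
qed

lemma connected_in_superlevel_iff:
  assumes "finite S"
  shows "connected_in (superlevel S P \<alpha>) E u v \<longleftrightarrow>
           connected_in S E u v \<and> \<alpha> \<le> ereal (appearance S P E u v)"
proof
  assume "connected_in (superlevel S P \<alpha>) E u v"
  then obtain xs where xs: "is_path (superlevel S P \<alpha>) E xs u v"
    unfolding connected_in_def by blast
  then have path: "is_path S E xs u v" by (auto simp: is_path_def superlevel_def)
  have "Min (P ` set xs) \<in> P ` set xs" using xs by (intro Min_in) (auto simp: is_path_def)
  then obtain y where "y \<in> set xs" "Min (P ` set xs) = P y" by auto
  then have "\<alpha> \<le> ereal (Min (P ` set xs))" using xs by (auto simp: is_path_def superlevel_def)
  also have "\<dots> \<le> ereal (appearance S P E u v)"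
    using path_min_le_appearance[OF assms path] by simp
  finally show "connected_in S E u v \<and> \<alpha> \<le> ereal (appearance S P E u v)"
    using path unfolding connected_in_def by blast
next
  assume conn: "connected_in S E u v \<and> \<alpha> \<le> ereal (appearance S P E u v)"
  then obtain xs where xs: "is_path S E xs u v" "appearance S P E u v = Min (P ` set xs)"
    using appearance_attained[OF assms] by blast
  have "\<alpha> \<le> ereal (P y)" if "y \<in> set xs" for y
  proof -
    have "appearance S P E u v \<le> P y" using xs(2) that by simp
    then show ?thesis using conn order_trans by fastforce
  qed
  then have "is_path (superlevel S P \<alpha>) E xs u v"
    using xs(1) by (auto simp: is_path_def superlevel_def)
  then show "connected_in (superlevel S P \<alpha>) E u v" unfolding connected_in_def by blast
qed

lemma death_eq_SUP_appearance:
  assumes "finite S"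
  shows "death S P E v = (SUP u \<in> {u \<in> S. elder_rank S P u < elder_rank S P v \<and> connected_in S E u v}.
                            ereal (appearance S P E u v))"
  (is "_ = Sup (?app ` ?older)")
proof -
  have "death S P E v = Sup {\<alpha>. \<exists>u \<in> ?older. \<alpha> \<le> ?app u}"
    unfolding death_def connected_in_superlevel_iff[OF assms] by (rule arg_cong[where f = Sup]) auto
  also have "\<dots> = Sup (?app ` ?older)"
    by (rule antisym, rule Sup_least) (auto intro: order_trans SUP_upper SUP_least Sup_upper)
  finally show ?thesis .
qed

lemma death_le_birth:
  assumes "finite S"
  shows "death S P E v \<le> ereal (P v)"
  unfolding death_eq_SUP_appearance[OF assms]
  using appearance_le_endpoint[OF assms] by (intro SUP_least) auto

lemma ediff_self: "ediff a a = 0"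
  by (simp add: ediff_def)

lemma ediff_commute: "ediff a b = ediff b a"
  by (cases a; cases b) (auto simp: ediff_def)

lemma ediff_le_if_below:
  fixes x e1 e2 :: ereal
  assumes "e1 \<le> x" "e2 \<le> x" "ediff e1 x \<le> ereal M" "ediff e2 x \<le> ereal M"
  shows "ediff e1 e2 \<le> ereal M"
  using assms by (cases e1; cases e2; cases x) (auto simp: ediff_def split: if_splits)

lemma ediff_SUP_ereal_le:
  fixes f g :: "'b \<Rightarrow> real"
  assumes "finite U" "0 \<le> M" "\<And>u. u \<in> U \<Longrightarrow> \<bar>f u - g u\<bar> \<le> M"
  shows "ediff (SUP u \<in> U. ereal (f u)) (SUP u \<in> U. ereal (g u)) \<le> ereal M"
proof (cases "U = {}")
  case False
  have SUP_eq_Max: "(SUP u \<in> U. ereal (h u)) = ereal (Max (h ` U))" for h :: "'b \<Rightarrow> real"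
    using assms(1) False
    by (simp add: cSup_eq_Max mono_Max_commute[of ereal] mono_def flip: image_image)
  have Max_diff: "Max (h ` U) - Max (k ` U) \<le> M"
    if "\<And>u. u \<in> U \<Longrightarrow> \<bar>h u - k u\<bar> \<le> M" for h k :: "'b \<Rightarrow> real"
  proof -
    have "Max (h ` U) \<in> h ` U" using assms(1) False by (intro Max_in) auto
    then obtain u where "u \<in> U" "Max (h ` U) = h u" by auto
    moreover have "k u \<le> Max (k ` U)" using \<open>u \<in> U\<close> assms(1) by auto
    ultimately show ?thesis using that[of u] by linarith
  qed
  have "\<bar>Max (f ` U) - Max (g ` U)\<bar> \<le> M"
    using Max_diff[of f g] Max_diff[of g f] assms(3) by (fastforce simp: abs_minus_commute)
  then show ?thesis using assms(2) by (simp add: SUP_eq_Max ediff_def)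
qed (simp add: ediff_def assms(2))

lemma ediff_death_le:
  assumes "finite S" "components S E1 = components S E2" "0 \<le> M"
    and "\<And>u v. u \<in> S \<Longrightarrow> v \<in> S \<Longrightarrow>
           \<bar>appearance S P E1 u v - appearance S P E2 u v\<bar> \<le> M"
  shows "ediff (death S P E1 v) (death S P E2 v) \<le> ereal M"
proof -
  define older where
    "older E = {u \<in> S. elder_rank S P u < elder_rank S P v \<and> connected_in S E u v}" for E
  have "older E2 = older E1"
    unfolding older_def using connected_in_iff_of_components_eq[OF assms(2)] by blast
  moreover have "finite (older E1)" using assms(1) by (simp add: older_def)
  moreover have "\<bar>appearance S P E1 u v - appearance S P E2 u v\<bar> \<le> M" if "u \<in> older E1" for u
    using that assms(4) connected_in_imp_mem(2)[of S E1 u v] by (auto simp: older_def)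
  ultimately show ?thesis
    unfolding death_eq_SUP_appearance[OF assms(1)] older_def[symmetric]
    using ediff_SUP_ereal_le[OF _ assms(3)] by metis
qed

subsection \<open>Matching the diagrams\<close>

lemma bij_betw_glue_fibers:
  assumes "\<And>x. bij_betw (g x) {i \<in> I. l i = x} {j \<in> J. l' j = x}"
  shows "bij_betw (\<lambda>i. g (l i) i) I J"
  unfolding bij_betw_def
proof
  have maps_to: "g (l i) i \<in> J \<and> l' (g (l i) i) = l i" if "i \<in> I" for i
    using that assms[of "l i"] unfolding bij_betw_def by blast
  show "inj_on (\<lambda>i. g (l i) i) I"
  proof (rule inj_onI)
    fix i j assume ij: "i \<in> I" "j \<in> I" "g (l i) i = g (l j) j"
    then have "l i = l j" using maps_to by metis
    with ij show "i = j" using assms[of "l i"] unfolding bij_betw_def inj_on_def by auto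
  qed
  show "(\<lambda>i. g (l i) i) ` I = J"
  proof
    show "(\<lambda>i. g (l i) i) ` I \<subseteq> J" using maps_to by blast
    show "J \<subseteq> (\<lambda>i. g (l i) i) ` I"
    proof
      fix j assume "j \<in> J"
      then have "j \<in> g (l' j) ` {i \<in> I. l i = l' j}"
        using assms[of "l' j"] unfolding bij_betw_def by blast
      then show "j \<in> (\<lambda>i. g (l i) i) ` I" by force
    qed
  qed
qed

lemma obtain_level_preserving_bij:
  assumes "\<And>x. countable {i \<in> I. l i = x}" "\<And>x. infinite {i \<in> I. l i = x}"
    and "\<And>x. countable {j \<in> J. l' j = x}" "\<And>x. infinite {j \<in> J. l' j = x}"
  obtains h where "bij_betw h I J" "\<And>i. i \<in> I \<Longrightarrow> l' (h i) = l i"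
proof -
  define g where "g x = from_nat_into {j \<in> J. l' j = x} \<circ>
                        inv_into UNIV (from_nat_into {i \<in> I. l i = x})" for x
  have g: "bij_betw (g x) {i \<in> I. l i = x} {j \<in> J. l' j = x}" for x
    unfolding g_def using assms
    by (intro bij_betw_trans[OF bij_betw_inv_into] bij_betw_from_nat_into) auto
  show thesis
  proof
    show "bij_betw (\<lambda>i. g (l i) i) I J" by (rule bij_betw_glue_fibers[OF g])
    show "l' (g (l i) i) = l i" if "i \<in> I" for i
      using g[of "l i"] that unfolding bij_betw_def by blast
  qed
qed

lemma padded_index_level_sets:
  fixes l :: "'a pd_idx \<Rightarrow> ereal"
  assumes "finite X" "\<And>x n. l (Inr (x, n)) = x"
  shows "countable {i \<in> Inl ` X \<union> range Inr. l i = x}"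
    and "infinite {i \<in> Inl ` X \<union> range Inr. l i = x}"
proof -
  have "{i \<in> Inl ` X \<union> range Inr. l i = x} \<subseteq> Inl ` X \<union> range (\<lambda>n. Inr (x, n))"
    using assms(2) by auto
  then show "countable {i \<in> Inl ` X \<union> range Inr. l i = x}"
    by (rule countable_subset) (simp add: assms(1) countable_finite)
  have "range (\<lambda>n. Inr (x, n)) \<subseteq> {i \<in> Inl ` X \<union> range Inr. l i = x}"
    using assms(2) by auto
  moreover have "infinite (range (\<lambda>n. Inr (x, n) :: 'a pd_idx))"
    by (rule range_inj_infinite) (auto simp: inj_def)
  ultimately show "infinite {i \<in> Inl ` X \<union> range Inr. l i = x}"
    using infinite_super by blast
qed

lemma bij_betw_if_id:
  assumes "bij_betw h A B" "A \<inter> C = {}" "C \<inter> B = {}"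
  shows "bij_betw (\<lambda>i. if i \<in> C then i else h i) (C \<union> A) (C \<union> B)"
proof (rule bij_betw_combine)
  show "bij_betw (\<lambda>i. if i \<in> C then i else h i) C C" by (simp add: bij_betw_def inj_on_def)
  have "bij_betw (\<lambda>i. if i \<in> C then i else h i) A B \<longleftrightarrow> bij_betw h A B"
    using assms(2) by (intro bij_betw_cong) auto
  with assms(1) show "bij_betw (\<lambda>i. if i \<in> C then i else h i) A B" by simp
qed (use assms(3) in blast)

lemma pd_point_near_diagonal:
  assumes "finite S" "0 \<le> M"
    and "i \<in> Inl ` {v \<in> S. death S P E v < ereal (P v) \<and> \<not> death S P E' v < ereal (P v)} \<union> range Inr"
    and "\<And>v. v \<in> S \<Longrightarrow> ediff (death S P E v) (death S P E' v) \<le> ereal M"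
  shows "snd (pd_point S P E i) \<le> fst (pd_point S P E i) \<and>
         ediff (snd (pd_point S P E i)) (fst (pd_point S P E i)) \<le> ereal M"
proof (cases i)
  case (Inl v)
  with assms(3) have v: "v \<in> S" "\<not> death S P E' v < ereal (P v)" by auto
  then have "death S P E' v = ereal (P v)"
    using death_le_birth[OF assms(1), of P E' v] by (metis antisym not_less)
  then show ?thesis
    using assms(4)[OF v(1)] death_le_birth[OF assms(1)] by (simp add: Inl pd_point_def)
next
  case (Inr p)
  then show ?thesis using assms(2) by (cases p) (simp add: pd_point_def ediff_self)
qed

lemma bottleneck_le_of_ediff_death_le:
  assumes "finite S" "0 \<le> M"
    and close: "\<And>v. v \<in> S \<Longrightarrow> ediff (death S P E1 v) (death S P E2 v) \<le> ereal M"
  shows "bottleneck (persistence_diagram S P E1) (persistence_diagram S P E2) \<le> ereal M"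
proof -
  define off_diag where "off_diag E = {v \<in> S. death S P E v < ereal (P v)}" for E
  define both :: "'a pd_idx set" where "both = Inl ` (off_diag E1 \<inter> off_diag E2)"
  define only1 :: "'a pd_idx set" where "only1 = Inl ` (off_diag E1 - off_diag E2) \<union> range Inr"
  define only2 :: "'a pd_idx set" where "only2 = Inl ` (off_diag E2 - off_diag E1) \<union> range Inr"
  let ?b1 = "\<lambda>i. fst (pd_point S P E1 i)" and ?b2 = "\<lambda>i. fst (pd_point S P E2 i)"
  have index1: "pd_index S P E1 = both \<union> only1" and index2: "pd_index S P E2 = both \<union> only2"
    unfolding pd_index_def only1_def only2_def both_def off_diag_def by auto
  have fin: "finite (off_diag E1 - off_diag E2)" "finite (off_diag E2 - off_diag E1)"
    using assms(1) by (auto simp: off_diag_def)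
  have "countable {i \<in> only1. ?b1 i = x}" "infinite {i \<in> only1. ?b1 i = x}" for x
    unfolding only1_def by (rule padded_index_level_sets[OF fin(1)]; simp add: pd_point_def)+
  moreover have "countable {i \<in> only2. ?b2 i = x}" "infinite {i \<in> only2. ?b2 i = x}" for x
    unfolding only2_def by (rule padded_index_level_sets[OF fin(2)]; simp add: pd_point_def)+
  ultimately obtain h where h: "bij_betw h only1 only2" and h_birth: "\<And>i. i \<in> only1 \<Longrightarrow> ?b2 (h i) = ?b1 i"
    by (rule obtain_level_preserving_bij) blast
  define F where "F i = (if i \<in> both then i else h i)" for i
  have F_bij: "bij_betw F (pd_index S P E1) (pd_index S P E2)"
    unfolding index1 index2 F_def
    by (rule bij_betw_if_id[OF h]) (auto simp: only1_def only2_def both_def)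
  have cost: "linf_dist (pd_point S P E1 i) (pd_point S P E2 (F i)) \<le> ereal M"
    if "i \<in> pd_index S P E1" for i
  proof (cases "i \<in> both")
    case True
    then obtain v where "i = Inl v" "v \<in> S" "F i = i" by (auto simp: both_def off_diag_def F_def)
    with close assms(2) show ?thesis by (simp add: pd_point_def linf_dist_def ediff_self)
  next
    case False
    with that have i: "i \<in> only1" and Fi: "F i = h i" by (auto simp: index1 F_def)
    have "h i \<in> only2" using h i by (auto simp: bij_betw_def)
    have near1: "snd (pd_point S P E1 i) \<le> ?b1 i \<and> ediff (snd (pd_point S P E1 i)) (?b1 i) \<le> ereal M"
      using i close by (intro pd_point_near_diagonal[OF assms(1,2)]) (auto simp: only1_def off_diag_def)
    have near2: "snd (pd_point S P E2 (h i)) \<le> ?b2 (h i) \<and>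
        ediff (snd (pd_point S P E2 (h i))) (?b2 (h i)) \<le> ereal M"
    proof (rule pd_point_near_diagonal[OF assms(1,2)])
      show "h i \<in> Inl ` {v \<in> S. death S P E2 v < ereal (P v) \<and> \<not> death S P E1 v < ereal (P v)}
          \<union> range Inr"
        using \<open>h i \<in> only2\<close> by (auto simp: only2_def off_diag_def)
      show "ediff (death S P E2 v) (death S P E1 v) \<le> ereal M" if "v \<in> S" for v
        by (subst ediff_commute) (rule close[OF that])
    qed
    have "ediff (snd (pd_point S P E1 i)) (snd (pd_point S P E2 (h i))) \<le> ereal M"
      using ediff_le_if_below[of "snd (pd_point S P E1 i)" "?b1 i" "snd (pd_point S P E2 (h i))" M]
        near1 near2 h_birth[OF i] by simp
    then show ?thesis using assms(2) h_birth[OF i] by (simp add: Fi linf_dist_def ediff_self)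
  qed
  have "bottleneck (persistence_diagram S P E1) (persistence_diagram S P E2)
      \<le> (SUP i \<in> pd_index S P E1. linf_dist (pd_point S P E1 i) (pd_point S P E2 (F i)))"
    unfolding bottleneck_def persistence_diagram_def fst_conv snd_conv
    by (rule INF_lower) (use F_bij in simp)
  also have "\<dots> \<le> ereal M" using cost by (rule SUP_least)
  finally show ?thesis .
qed

theorem theorem1:
  fixes S :: "'a::metric_space set" and P :: "'a \<Rightarrow> real"
    and \<delta> :: real and \<sigma> :: "'a \<Rightarrow> 'a \<Rightarrow> real"
  assumes "finite S" and "S \<noteq> {}"
    and "\<forall>x. 0 \<le> P x"
    and "0 \<le> \<delta>"
    and "\<forall>x y. 0 < \<sigma> x y"
    and "components S (rips_edge \<delta>) = components S (sigma_rips_edge \<sigma>)"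
  shows "bottleneck (persistence_diagram S P (rips_edge \<delta>))
                    (persistence_diagram S P (sigma_rips_edge \<sigma>))
         \<le> ereal (Max {\<bar>appearance S P (rips_edge \<delta>) u v - appearance S P (sigma_rips_edge \<sigma>) u v\<bar>
                       | u v. u \<in> S \<and> v \<in> S})"
proof -
  let ?E1 = "rips_edge \<delta>" and ?E2 = "sigma_rips_edge \<sigma>"
  let ?gaps = "{\<bar>appearance S P ?E1 u v - appearance S P ?E2 u v\<bar> | u v. u \<in> S \<and> v \<in> S}"
  have "?gaps = (\<lambda>(u, v). \<bar>appearance S P ?E1 u v - appearance S P ?E2 u v\<bar>) ` (S \<times> S)"
    by auto
  then have "finite ?gaps" using assms(1) by simp
  then have gap_le: "\<bar>appearance S P ?E1 u v - appearance S P ?E2 u v\<bar> \<le> Max ?gaps"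
    if "u \<in> S" "v \<in> S" for u v
    using that by (intro Max_ge) blast+
  obtain s where "s \<in> S" using assms(2) by blast
  then have "0 \<le> Max ?gaps" using gap_le[of s s] by linarith
  then show ?thesis
    using bottleneck_le_of_ediff_death_le[OF assms(1)] ediff_death_le[OF assms(1,6) _ gap_le] by blast
qed

end
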